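(* Assume (h), (R-q) with $q=4$, ($\pi$-F) with $p=4$ and ($\pi$-T) with $p=4$, and fix $h\in(0,h_0]$. Then the operator $T$ defined by $T(R)_t=1_{\{t<\tau_h\}}\mathbb E_t[R_{t+h}]+1_{\{t<\tau_h\}}hf_h(t,R_t)+1_{\{t=\tau_h\}}\bar\xi$, $t\in\pi_h$, maps $\mathcal V(\tau_h)$ into itself and is a contraction with respect to $\|\cdot\|_{\tau_h}$.
   Context: $(\Omega,\mathcal F,(\mathcal F_t)_{t\ge0},\mathbb P)$ is a filtered probability space whose filtration is generated by a $d$-dimensional Brownian motion, augmented by null sets; $\mathbb E_t=\mathbb E[\cdot\mid\mathcal F_t]$. $\tau$ is a stopping time and $L_f>0$ a constant. For $h>0$, $\pi_h=\{nh:n\in\mathbb N_0\}$; for each $h\in(0,h_0]$ there are given a finite $\pi_h$-valued stopping time $\tau_h$, an $\mathcal F_{\tau_h}$-measurable $\bar\xi$, and $f_h:\pi_h\times\Omega\times\mathbb R\to\mathbb R$. $\mathcal V(\tau_h)$ is the set of sequences $(R_t)_{t\in\pi_h}$ with $R_t\in L^2(\mathcal F_t)$, $1_{\{t>\tau_h\}}R_t=0$ for all $t$, and $\|R\|_{\tau_h}=\sum_{t\in\pi_h}(1-3L_fh)^{-t/h}\|1_{\{t\le\tau_h\}}R_t\|_{L^2}<\infty$; it is a Banach space. Assumptions: (h) $h_0<\min\{L_f,\frac1{12L_f}\}$ and $h\in(0,h_0]$. (R-q) for a parameter $q\ge2$: there is $\rho>4qL_f$ with $\exp(\rho\tau)\in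 L^1$ and $\sup_{h\in(0,h_0]}\exp(\rho\tau_h)\in L^1$. ($\pi$-F) for a parameter $p$: each $f_h$ is Lipschitz in its last variable with the constant $L_f$, $f_h(t,A)$ is $\mathcal F_t$-measurable for every $\mathcal F_t$-measurable $A$, and $\mathbb E[\sup_{h\in(0,h_0]}\sup_{t\in\pi_h\cap[0,\tau\vee\tau_h]}|f_h(t,0)|^p]<\infty$. ($\pi$-T) for a parameter $p$: $\bar\xi$ is $\mathcal F_{\tau_h}$-measurable and $\mathbb E[\sup_{h\in(0,h_0]}|\bar\xi|^p]<\infty$. *)

theory Defs
  imports "HOL-Probability.Probability"
begin

definition std_brownian_motion :: "'a measure \<Rightarrow> (real \<Rightarrow> 'a \<Rightarrow> real ^ 'd::finite) \<Rightarrow> bool" where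
  "std_brownian_motion M W \<longleftrightarrow>
     prob_space M \<and>
     (\<forall>t. W t \<in> borel_measurable M) \<and>
     (AE \<omega> in M. W 0 \<omega> = 0) \<and>
     (AE \<omega> in M. continuous_on {0..} (\<lambda>t. W t \<omega>)) \<and>
     (\<forall>ts :: real list. sorted_wrt (<) ts \<and> ts \<noteq> [] \<and> 0 \<le> hd ts \<longrightarrow>
        prob_space.indep_vars M (\<lambda>_. borel)
          (\<lambda>(i, j) \<omega>. (W (ts ! Suc i) \<omega> - W (ts ! i) \<omega>) $ j) ({..<length ts - 1} \<times> UNIV) \<and>
        (\<forall>i < length ts - 1. \<forall>j.
          distributed M lborel (\<lambda>\<omega>. (W (ts ! Suc i) \<omega> - W (ts ! i) \<omega>) $ j)
            (\<lambda>x. ennreal (normal_density 0 (sqrt (ts ! Suc i - ts ! i)) x))))"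

definition bm_filtration :: "'a measure \<Rightarrow> (real \<Rightarrow> 'a \<Rightarrow> real ^ 'd::finite) \<Rightarrow> real \<Rightarrow> 'a measure" where
  "bm_filtration M W t = sigma (space M)
     ({W s -` B \<inter> space M | s B. 0 \<le> s \<and> s \<le> t \<and> B \<in> sets borel} \<union> null_sets M)"

definition finite_expectation :: "'a measure \<Rightarrow> ('a \<Rightarrow> ennreal) \<Rightarrow> bool" where
  "finite_expectation M X \<longleftrightarrow> X \<in> borel_measurable M \<and> (\<integral>\<^sup>+ \<omega>. X \<omega> \<partial>M) < \<infinity>"

definition L2norm :: "'a measure \<Rightarrow> ('a \<Rightarrow> real) \<Rightarrow> real" where
  "L2norm M X = sqrt (\<integral>\<omega>. (X \<omega>)\<^sup>2 \<partial>M)"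

(* time t = n h of the grid pi_h is represented by the index n; tau_h = N * h *)
definition Vnorm :: "'a measure \<Rightarrow> ('a \<Rightarrow> nat) \<Rightarrow> real \<Rightarrow> real \<Rightarrow> (nat \<Rightarrow> 'a \<Rightarrow> real) \<Rightarrow> real" where
  "Vnorm M N h L R =
     (\<Sum>n. inverse ((1 - 3 * L * h) ^ n) * L2norm M (\<lambda>\<omega>. indicator {\<omega>. n \<le> N \<omega>} \<omega> * R n \<omega>))"

definition Vspace :: "'a measure \<Rightarrow> (nat \<Rightarrow> 'a measure) \<Rightarrow> ('a \<Rightarrow> nat) \<Rightarrow> real \<Rightarrow> real
    \<Rightarrow> (nat \<Rightarrow> 'a \<Rightarrow> real) set" where
  "Vspace M G N h L = {R.
     (\<forall>n. R n \<in> borel_measurable (G n) \<and> integrable M (\<lambda>\<omega>. (R n \<omega>)\<^sup>2)) \<and>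
     (\<forall>n. AE \<omega> in M. N \<omega> < n \<longrightarrow> R n \<omega> = 0) \<and>
     summable (\<lambda>n. inverse ((1 - 3 * L * h) ^ n) * L2norm M (\<lambda>\<omega>. indicator {\<omega>. n \<le> N \<omega>} \<omega> * R n \<omega>))}"

definition Top :: "'a measure \<Rightarrow> (nat \<Rightarrow> 'a measure) \<Rightarrow> ('a \<Rightarrow> nat) \<Rightarrow> real
    \<Rightarrow> (nat \<Rightarrow> 'a \<Rightarrow> real \<Rightarrow> real) \<Rightarrow> ('a \<Rightarrow> real) \<Rightarrow> (nat \<Rightarrow> 'a \<Rightarrow> real) \<Rightarrow> nat \<Rightarrow> 'a \<Rightarrow> real" where
  "Top M G N h f xi R n \<omega> =
     indicator {\<omega>. n < N \<omega>} \<omega> * real_cond_exp M (G n) (R (Suc n)) \<omega>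
     + indicator {\<omega>. n < N \<omega>} \<omega> * (h * f n \<omega> (R n \<omega>))
     + indicator {\<omega>. n = N \<omega>} \<omega> * xi \<omega>"

end

theory Submission
  imports Defs
begin

(* Write d_n for the L2 norm of R_n on the event {n <= N}. Conditional expectation is an
   L2 contraction (Jensen) and f is L-Lipschitz, so the n-th component of TR - TS has norm at
   most d_(n+1) + hL d_n. Against the weights w_n = (1 - 3Lh)^(-n) the index shift costs a
   factor 1 - 3Lh, whence ||TR - TS|| <= (1 - 2Lh) ||R - S||. T maps V into itself because T 0
   does: by Young's inequality the fourth moments of the data and the exponential moment of N
   make the n-th data term O(exp(-rho h n / 4)) in L2, and rho > 16 L gives
   (1 - 3Lh) exp(rho h / 4) > 1, so the weighted series converges. *)

section \<open>Square-integrable random variables\<close>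

definition square_integrable :: "'a measure \<Rightarrow> ('a \<Rightarrow> real) \<Rightarrow> bool" where
  "square_integrable M X \<longleftrightarrow> X \<in> borel_measurable M \<and> integrable M (\<lambda>x. (X x)\<^sup>2)"

lemma square_integrableI [intro?]:
  "X \<in> borel_measurable M \<Longrightarrow> integrable M (\<lambda>x. (X x)\<^sup>2) \<Longrightarrow> square_integrable M X"
  by (simp add: square_integrable_def)

lemma square_integrableD:
  assumes "square_integrable M X"
  shows "X \<in> borel_measurable M" "integrable M (\<lambda>x. (X x)\<^sup>2)"
  using assms by (simp_all add: square_integrable_def)

lemma square_integrable_zero [simp]: "square_integrable M (\<lambda>x. 0)"
  by (simp add: square_integrable_def)

lemma square_integrable_cmult:
  "square_integrable M X \<Longrightarrow> square_integrable M (\<lambda>x. c * X x)"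
  by (auto simp: square_integrable_def power_mult_distrib)

lemma square_integrable_abs:
  "square_integrable M X \<Longrightarrow> square_integrable M (\<lambda>x. \<bar>X x\<bar>)"
  by (auto simp: square_integrable_def)

lemma integrable_mult_of_square_integrable:
  assumes X: "square_integrable M X" and Y: "square_integrable M Y"
  shows "integrable M (\<lambda>x. X x * Y x)"
proof (rule Bochner_Integration.integrable_bound)
  show "integrable M (\<lambda>x. ((X x)\<^sup>2 + (Y x)\<^sup>2) / 2)"
    using X Y by (simp add: square_integrable_def)
  have "\<bar>X x * Y x\<bar> \<le> ((X x)\<^sup>2 + (Y x)\<^sup>2) / 2" for x
    using sum_squares_bound[of "\<bar>X x\<bar>" "\<bar>Y x\<bar>"] by (simp add: abs_mult)
  then show "AE x in M. norm (X x * Y x) \<le> norm (((X x)\<^sup>2 + (Y x)\<^sup>2) / 2)"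
    by (intro AE_I2) (smt (verit) real_norm_def)
qed (use X Y in \<open>auto simp: square_integrable_def\<close>)

lemma square_integrable_add:
  assumes X: "square_integrable M X" and Y: "square_integrable M Y"
  shows "square_integrable M (\<lambda>x. X x + Y x)"
proof
  show "(\<lambda>x. X x + Y x) \<in> borel_measurable M"
    using X Y by (auto simp: square_integrable_def)
  have "integrable M (\<lambda>x. (X x)\<^sup>2 + (Y x)\<^sup>2 + 2 * (X x * Y x))"
    using X Y integrable_mult_of_square_integrable[OF X Y] by (simp add: square_integrable_def)
  then show "integrable M (\<lambda>x. (X x + Y x)\<^sup>2)"
    by (simp add: power2_sum mult.assoc)
qed

lemma square_integrable_diff:
  "square_integrable M X \<Longrightarrow> square_integrable M Y \<Longrightarrow> square_integrable M (\<lambda>x. X x - Y x)"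
  using square_integrable_add[of M X "\<lambda>x. - Y x"] square_integrable_cmult[of M Y "-1"] by simp

lemma square_integrable_dominated:
  assumes "X \<in> borel_measurable M" and Y: "square_integrable M Y"
    and le: "AE x in M. \<bar>X x\<bar> \<le> Y x"
  shows "square_integrable M X"
proof
  show "integrable M (\<lambda>x. (X x)\<^sup>2)"
  proof (rule Bochner_Integration.integrable_bound)
    show "integrable M (\<lambda>x. (Y x)\<^sup>2)" using Y by (rule square_integrableD)
    show "AE x in M. norm ((X x)\<^sup>2) \<le> norm ((Y x)\<^sup>2)"
      using le by eventually_elim (simp add: abs_le_square_iff[symmetric])
  qed (use assms in simp)
qed fact

lemma L2norm_nonneg: "0 \<le> L2norm M X"
  by (simp add: L2norm_def)

lemma L2norm_cmult: "L2norm M (\<lambda>x. c * X x) = \<bar>c\<bar> * L2norm M X"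
  by (simp add: L2norm_def power_mult_distrib real_sqrt_mult)

lemma L2norm_uminus [simp]: "L2norm M (\<lambda>x. - X x) = L2norm M X"
  by (simp add: L2norm_def)

lemma L2norm_abs [simp]: "L2norm M (\<lambda>x. \<bar>X x\<bar>) = L2norm M X"
  by (simp add: L2norm_def)

lemma L2norm_mono_AE:
  assumes "X \<in> borel_measurable M" and Y: "square_integrable M Y"
    and le: "AE x in M. \<bar>X x\<bar> \<le> Y x"
  shows "L2norm M X \<le> L2norm M Y"
proof -
  have "(\<integral>x. (X x)\<^sup>2 \<partial>M) \<le> (\<integral>x. (Y x)\<^sup>2 \<partial>M)"
  proof (rule integral_mono_AE)
    show "AE x in M. (X x)\<^sup>2 \<le> (Y x)\<^sup>2"
      using le by eventually_elim (simp add: abs_le_square_iff[symmetric])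
  qed (use square_integrable_dominated[OF assms] Y in \<open>simp_all add: square_integrable_def\<close>)
  then show ?thesis by (simp add: L2norm_def)
qed

lemma L2norm_cong_AE:
  assumes X: "square_integrable M X" and "Y \<in> borel_measurable M" and eq: "AE x in M. X x = Y x"
  shows "L2norm M X = L2norm M Y"
proof -
  have le: "AE x in M. \<bar>Y x\<bar> \<le> \<bar>X x\<bar>" "AE x in M. \<bar>X x\<bar> \<le> \<bar>Y x\<bar>"
    using eq by (auto elim: AE_mp)
  have Y: "square_integrable M Y"
    by (rule square_integrable_dominated[OF assms(2) square_integrable_abs[OF X] le(1)])
  show ?thesis
    using L2norm_mono_AE[OF _ square_integrable_abs[OF X] le(1)]
      L2norm_mono_AE[OF _ square_integrable_abs[OF Y] le(2)] assms(2) X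
    by (auto simp: square_integrable_def)
qed

lemma L2norm_power2: "(L2norm M X)\<^sup>2 = (\<integral>x. (X x)\<^sup>2 \<partial>M)"
  by (simp add: L2norm_def integral_nonneg)

lemma integral_abs_mult_le_L2norm:
  assumes X: "square_integrable M X" and Y: "square_integrable M Y"
  shows "(\<integral>x. \<bar>X x * Y x\<bar> \<partial>M) \<le> L2norm M X * L2norm M Y"
proof -
  have [measurable]: "X \<in> borel_measurable M" "Y \<in> borel_measurable M"
    using X Y by (simp_all add: square_integrable_def)
  have nn_sq: "(\<integral>\<^sup>+x. ennreal \<bar>Z x\<bar> ^ 2 \<partial>M) = ennreal ((L2norm M Z)\<^sup>2)"
    if Z: "square_integrable M Z" for Z
  proof -
    have "(\<integral>\<^sup>+x. ennreal \<bar>Z x\<bar> ^ 2 \<partial>M) = (\<integral>\<^sup>+x. ennreal ((Z x)\<^sup>2) \<partial>M)"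
      by (simp add: ennreal_power)
    also have "\<dots> = ennreal (\<integral>x. (Z x)\<^sup>2 \<partial>M)"
      using Z by (intro nn_integral_eq_integral) (auto simp: square_integrable_def)
    finally show ?thesis by (simp add: L2norm_power2)
  qed
  have XY: "integrable M (\<lambda>x. \<bar>X x * Y x\<bar>)"
    using integrable_mult_of_square_integrable[OF X Y] by simp
  have "ennreal ((\<integral>x. \<bar>X x * Y x\<bar> \<partial>M)\<^sup>2) = (\<integral>\<^sup>+x. ennreal \<bar>X x * Y x\<bar> \<partial>M)\<^sup>2"
    using nn_integral_eq_integral[OF XY] by (simp add: ennreal_power)
  also have "\<dots> = (\<integral>\<^sup>+x. ennreal \<bar>X x\<bar> * ennreal \<bar>Y x\<bar> \<partial>M)\<^sup>2"
    by (intro arg_cong[where f="\<lambda>a. a\<^sup>2"] nn_integral_cong) (simp add: abs_mult ennreal_mult)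
  also have "\<dots> \<le> (\<integral>\<^sup>+x. ennreal \<bar>X x\<bar> ^ 2 \<partial>M) * (\<integral>\<^sup>+x. ennreal \<bar>Y x\<bar> ^ 2 \<partial>M)"
    by (rule Cauchy_Schwarz_nn_integral) measurable
  also have "\<dots> = ennreal ((L2norm M X * L2norm M Y)\<^sup>2)"
    using nn_sq[OF X] nn_sq[OF Y] by (simp add: ennreal_mult[symmetric] power_mult_distrib)
  finally have "(\<integral>x. \<bar>X x * Y x\<bar> \<partial>M)\<^sup>2 \<le> (L2norm M X * L2norm M Y)\<^sup>2"
    by (simp add: ennreal_le_iff)
  then show ?thesis
    by (rule power2_le_imp_le) (simp add: L2norm_nonneg)
qed

lemma L2norm_triangle:
  assumes X: "square_integrable M X" and Y: "square_integrable M Y"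
  shows "L2norm M (\<lambda>x. X x + Y x) \<le> L2norm M X + L2norm M Y"
proof -
  have XY: "integrable M (\<lambda>x. X x * Y x)"
    by (rule integrable_mult_of_square_integrable[OF X Y])
  have sq: "(X x + Y x)\<^sup>2 = (X x)\<^sup>2 + (Y x)\<^sup>2 + 2 * (X x * Y x)" for x
    by (simp add: power2_sum)
  have "(L2norm M (\<lambda>x. X x + Y x))\<^sup>2 = (L2norm M X)\<^sup>2 + (L2norm M Y)\<^sup>2 + 2 * (\<integral>x. X x * Y x \<partial>M)"
    using X Y XY by (simp only: L2norm_power2 sq) (simp add: square_integrable_def)
  also have "(\<integral>x. X x * Y x \<partial>M) \<le> (\<integral>x. \<bar>X x * Y x\<bar> \<partial>M)"
    using XY by (intro integral_mono) auto
  also note integral_abs_mult_le_L2norm[OF X Y]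
  finally have "(L2norm M (\<lambda>x. X x + Y x))\<^sup>2 \<le> (L2norm M X + L2norm M Y)\<^sup>2"
    by (simp add: power2_sum)
  then show ?thesis
    by (rule power2_le_imp_le) (simp add: L2norm_nonneg)
qed

lemma L2norm_triangle_diff:
  assumes "square_integrable M X" "square_integrable M Y"
  shows "L2norm M (\<lambda>x. X x - Y x) \<le> L2norm M X + L2norm M Y"
  using L2norm_triangle[of M X "\<lambda>x. - Y x"] square_integrable_cmult[of M Y "-1"] assms
  by simp

lemma (in finite_measure) integrable_if_square_integrable:
  assumes "square_integrable M X"
  shows "integrable M X"
  by (rule square_integrable_imp_integrable) (use assms in \<open>simp_all add: square_integrable_def\<close>)

lemma (in prob_space) real_cond_exp_L2_contraction:
  assumes "subalgebra M G" and X: "square_integrable M X"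
  shows "square_integrable M (real_cond_exp M G X)"
    and "L2norm M (real_cond_exp M G X) \<le> L2norm M X"
proof -
  interpret G: finite_measure_subalgebra M G
    using assms(1) by unfold_locales
  have [measurable]: "X \<in> borel_measurable M" and X2: "integrable M (\<lambda>x. (X x)\<^sup>2)"
    using X by (simp_all add: square_integrable_def)
  have X1: "integrable M X"
    using X by (rule integrable_if_square_integrable)
  have jensen: "AE x in M. (real_cond_exp M G X x)\<^sup>2 \<le> real_cond_exp M G (\<lambda>x. (X x)\<^sup>2) x"
    by (rule G.real_cond_exp_jensens_inequality(2)[of X UNIV 0 0 power2, OF X1 _ _ X2])
      (simp_all add: convex_power2)
  have C: "integrable M (real_cond_exp M G (\<lambda>x. (X x)\<^sup>2))"
    by (rule G.real_cond_exp_int(1)[OF X2])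
  have C2: "integrable M (\<lambda>x. (real_cond_exp M G X x)\<^sup>2)"
    by (rule Bochner_Integration.integrable_bound[OF C]) (use jensen in auto)
  then show "square_integrable M (real_cond_exp M G X)"
    by (simp add: square_integrable_def)
  have "(\<integral>x. (real_cond_exp M G X x)\<^sup>2 \<partial>M) \<le> (\<integral>x. real_cond_exp M G (\<lambda>x. (X x)\<^sup>2) x \<partial>M)"
    by (rule integral_mono_AE[OF C2 C jensen])
  also have "\<dots> = (\<integral>x. (X x)\<^sup>2 \<partial>M)"
    by (rule G.real_cond_exp_int(2)[OF X2])
  finally show "L2norm M (real_cond_exp M G X) \<le> L2norm M X"
    by (simp add: L2norm_def)
qed

section \<open>Exponential moments and geometric decay\<close>

lemma L2norm_le_of_fourth_moment:
  fixes Y Z E :: "'a \<Rightarrow> real" and N :: "'a \<Rightarrow> nat"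
  assumes [measurable]: "Y \<in> borel_measurable M"
    and Z: "integrable M Z" and E: "integrable M E" and \<beta>: "0 < \<beta>"
    and YZ: "AE x in M. (Y x)^4 \<le> Z x"
    and NE: "AE x in M. exp (\<beta> * real (N x)) \<le> E x"
    and YN: "\<And>x. Y x \<noteq> 0 \<Longrightarrow> n \<le> N x"
  shows "square_integrable M Y"
    and "L2norm M Y \<le> sqrt (((\<integral>x. Z x \<partial>M) + (\<integral>x. E x \<partial>M)) / 2) / exp (\<beta> / 4) ^ n"
proof -
  define p where "p = exp (\<beta> / 4) ^ n"
  have p: "0 < p" by (simp add: p_def)
  have ZE_pos: "AE x in M. 0 \<le> Z x \<and> 0 < E x"
    using YZ NE by eventually_elim (smt (verit) exp_gt_zero zero_le_power_eq_numeral even_numeral)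
  have moments_nonneg: "0 \<le> (\<integral>x. Z x \<partial>M) + (\<integral>x. E x \<partial>M)"
    using ZE_pos by (intro add_nonneg_nonneg integral_nonneg_AE) (auto elim: AE_mp)
  (* Young: y^2 s <= (y^4 + s^2) / 2 with s = exp (beta N / 2), and s >= p^2 on the support of Y *)
  have pointwise: "AE x in M. (Y x)\<^sup>2 \<le> (Z x + E x) / 2 / p\<^sup>2"
    using YZ NE ZE_pos
  proof eventually_elim
    case (elim x)
    have "(Y x)\<^sup>2 * p\<^sup>2 \<le> (Z x + E x) / 2" if "Y x \<noteq> 0"
    proof -
      define s where "s = exp (\<beta> * real (N x) / 2)"
      have "p\<^sup>2 = exp (\<beta> * real n / 2)"
        by (simp add: p_def power2_eq_square exp_of_nat_mult[symmetric] exp_add[symmetric] field_simps)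
      also have "\<dots> \<le> s"
        using YN[OF that] \<beta> by (simp add: s_def)
      finally have "(Y x)\<^sup>2 * p\<^sup>2 \<le> (Y x)\<^sup>2 * s"
        by (simp add: mult_left_mono)
      also have "\<dots> \<le> (((Y x)\<^sup>2)\<^sup>2 + s\<^sup>2) / 2"
        using sum_squares_bound[of "(Y x)\<^sup>2" s] by simp
      also have "s\<^sup>2 = exp (\<beta> * real (N x))"
        by (simp add: s_def power2_eq_square exp_add[symmetric])
      finally show ?thesis
        using elim by simp
    qed
    then show ?case
      using p elim(3) by (cases "Y x = 0") (simp_all add: field_simps)
  qed
  have ZE: "integrable M (\<lambda>x. (Z x + E x) / 2 / p\<^sup>2)"
    using Z E by simp
  have "integrable M (\<lambda>x. (Y x)\<^sup>2)"
  proof (rule Bochner_Integration.integrable_bound[OF ZE])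
    show "AE x in M. norm ((Y x)\<^sup>2) \<le> norm ((Z x + E x) / 2 / p\<^sup>2)"
      using pointwise by eventually_elim (metis abs_ge_self abs_power2 order_trans real_norm_def)
  qed simp
  then show Y: "square_integrable M Y"
    by (simp add: square_integrable_def)
  have "(L2norm M Y)\<^sup>2 \<le> (\<integral>x. (Z x + E x) / 2 / p\<^sup>2 \<partial>M)"
    unfolding L2norm_power2 using Y ZE pointwise
    by (intro integral_mono_AE) (simp_all add: square_integrable_def)
  also have "\<dots> = (sqrt (((\<integral>x. Z x \<partial>M) + (\<integral>x. E x \<partial>M)) / 2) / p)\<^sup>2"
    using Z E moments_nonneg by (simp add: power_divide)
  finally show "L2norm M Y \<le> sqrt (((\<integral>x. Z x \<partial>M) + (\<integral>x. E x \<partial>M)) / 2) / exp (\<beta> / 4) ^ n"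
    unfolding p_def[symmetric] by (rule power2_le_imp_le) (use p moments_nonneg in simp)
qed

lemma finite_expectation_integrable:
  assumes "finite_expectation M X"
  shows "integrable M (\<lambda>x. enn2real (X x))" and "AE x in M. X x < \<infinity>"
proof -
  have [measurable]: "X \<in> borel_measurable M" and fin: "(\<integral>\<^sup>+x. X x \<partial>M) < \<infinity>"
    using assms by (auto simp: finite_expectation_def)
  show ae: "AE x in M. X x < \<infinity>"
    using nn_integral_PInf_AE[of X M] fin by (simp add: top.not_eq_extremum)
  have "(\<integral>\<^sup>+x. ennreal (enn2real (X x)) \<partial>M) = (\<integral>\<^sup>+x. X x \<partial>M)"
    by (rule nn_integral_cong_AE) (use ae in auto)
  with fin show "integrable M (\<lambda>x. enn2real (X x))"
    by (intro integrableI_nn_integral_finite[where x="enn2real (\<integral>\<^sup>+x. X x \<partial>M)"]) auto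
qed

lemma finite_expectation_dominates:
  assumes "finite_expectation M X" and "\<And>x. ennreal (Y x) \<le> X x"
  shows "AE x in M. Y x \<le> enn2real (X x)"
  using finite_expectation_integrable(2)[OF assms(1)]
proof eventually_elim
  case (elim x)
  show ?case
  proof (cases "0 \<le> Y x")
    case True
    then show ?thesis
      using enn2real_mono[OF assms(2)[of x]] elim by (simp add: infinity_ennreal_def)
  qed (use enn2real_nonneg[of "X x"] in linarith)
qed

lemma summable_weighted_geometric:
  fixes q \<theta> C :: real
  assumes "0 < q" "1 < q * \<theta>"
  shows "summable (\<lambda>n. inverse (q ^ n) * (C / \<theta> ^ n))"
proof -
  have "0 < q * \<theta>"
    using assms by linarith
  then have "norm (inverse (q * \<theta>)) = inverse (q * \<theta>)"
    by (simp only: real_norm_def abs_of_pos positive_imp_inverse_positive)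
  also have "\<dots> < 1"
    using assms(2) by (simp only: inverse_less_1_iff) simp
  finally have "summable (\<lambda>n. C * inverse (q * \<theta>) ^ n)"
    by (intro summable_mult summable_geometric)
  moreover have "inverse (q ^ n) * (C / \<theta> ^ n) = C * inverse (q * \<theta>) ^ n" for n
    by (simp add: field_simps power_mult_distrib power_inverse)
  ultimately show ?thesis
    by simp
qed

lemma summable_weighted_L2norm_of_moments:
  fixes Y :: "nat \<Rightarrow> 'a \<Rightarrow> real" and N :: "'a \<Rightarrow> nat" and Z E :: "'a \<Rightarrow> ennreal"
  assumes Y: "\<And>n. Y n \<in> borel_measurable M"
    and Z: "finite_expectation M Z" and E: "finite_expectation M E"
    and YZ: "\<And>n x. ennreal ((Y n x)^4) \<le> Z x"
    and NE: "\<And>x. ennreal (exp (\<beta> * real (N x))) \<le> E x"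
    and YN: "\<And>n x. Y n x \<noteq> 0 \<Longrightarrow> n \<le> N x"
    and \<beta>: "0 < \<beta>" and q: "0 < q" "1 < q * exp (\<beta> / 4)"
  shows "square_integrable M (Y n)"
    and "summable (\<lambda>n. inverse (q ^ n) * L2norm M (Y n))"
proof -
  define K where "K = sqrt (((\<integral>x. enn2real (Z x) \<partial>M) + (\<integral>x. enn2real (E x) \<partial>M)) / 2)"
  note tail = L2norm_le_of_fourth_moment[where Y="Y n" and n=n and N=N for n, OF Y
      finite_expectation_integrable(1)[OF Z] finite_expectation_integrable(1)[OF E] \<beta>
      finite_expectation_dominates[OF Z YZ] finite_expectation_dominates[OF E NE] YN, folded K_def]
  show "square_integrable M (Y n)"
    by (rule tail(1))
  show "summable (\<lambda>n. inverse (q ^ n) * L2norm M (Y n))"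
  proof (rule summable_comparison_test'[OF summable_weighted_geometric[OF q, of K]])
    fix n
    have "inverse (q ^ n) * L2norm M (Y n) \<le> inverse (q ^ n) * (K / exp (\<beta> / 4) ^ n)"
      using tail(2) q by (intro mult_left_mono) simp_all
    then show "norm (inverse (q ^ n) * L2norm M (Y n)) \<le> inverse (q ^ n) * (K / exp (\<beta> / 4) ^ n)"
      using q by (simp add: L2norm_nonneg)
  qed
qed

lemma one_less_mult_exp_quarter:
  fixes x y :: real
  assumes "0 < x" "12 * x < 1" "16 * x < y"
  shows "1 < (1 - 3 * x) * exp (y / 4)"
proof -
  have "(1 - 3 * x) * (1 + 4 * x) = 1 + x * (1 - 12 * x)"
    by (simp add: algebra_simps)
  also have "1 < \<dots>"
    using assms by simp
  also have "(1 - 3 * x) * (1 + 4 * x) < (1 - 3 * x) * exp (y / 4)"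
    by (intro mult_strict_left_mono) (use assms exp_ge_add_one_self[of "y / 4"] in linarith)+
  finally show ?thesis .
qed

section \<open>Filtrations\<close>

lemma (in filtration) indicator_stopping_time_eq_mult_measurable:
  fixes X :: "'a \<Rightarrow> real"
  assumes T: "stopping_time F T" and X: "X \<in> borel_measurable (pre_sigma T)"
  shows "(\<lambda>\<omega>. indicator {\<omega>. t = T \<omega>} \<omega> * X \<omega>) \<in> borel_measurable (F t)"
  unfolding borel_measurable_iff_le
proof
  fix a :: real
  have [measurable]: "Measurable.pred (F t) (\<lambda>\<omega>. T \<omega> = t)"
    by (rule stopping_time_eq_const[OF T])
  have "{\<omega> \<in> \<Omega>. X \<omega> \<le> a} \<in> sets (pre_sigma T)"
    using X unfolding borel_measurable_iff_le space_pre_sigma by blast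
  then have "{\<omega> \<in> {\<omega> \<in> \<Omega>. X \<omega> \<le> a}. T \<omega> \<le> t} \<in> sets (F t)"
    by (intro sets_pre_sigmaD[OF T]) auto
  moreover have "{\<omega> \<in> space (F t). T \<omega> = t} \<in> sets (F t)" "{\<omega> \<in> space (F t). T \<omega> \<noteq> t \<and> 0 \<le> a} \<in> sets (F t)"
    by measurable
  moreover have "{\<omega> \<in> space (F t). indicator {\<omega>. t = T \<omega>} \<omega> * X \<omega> \<le> a}
      = ({\<omega> \<in> {\<omega> \<in> \<Omega>. X \<omega> \<le> a}. T \<omega> \<le> t} \<inter> {\<omega> \<in> space (F t). T \<omega> = t})
        \<union> {\<omega> \<in> space (F t). T \<omega> \<noteq> t \<and> 0 \<le> a}"
    by (auto simp: indicator_def space_F)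
  ultimately show "{\<omega> \<in> space (F t). indicator {\<omega>. t = T \<omega>} \<omega> * X \<omega> \<le> a} \<in> sets (F t)"
    by auto
qed

lemma bm_filtration_generators_subset:
  assumes "std_brownian_motion M W"
  shows "{W s -` B \<inter> space M | s B. 0 \<le> s \<and> s \<le> t \<and> B \<in> sets borel} \<union> null_sets M \<subseteq> sets M"
  using assms by (auto simp: std_brownian_motion_def intro: measurable_sets)

lemma subalgebra_bm_filtration:
  assumes "std_brownian_motion M W"
  shows "subalgebra M (bm_filtration M W t)"
  using bm_filtration_generators_subset[OF assms, of t] sets.sets_into_space
  unfolding subalgebra_def bm_filtration_def
  by (simp add: space_measure_of_conv sets_measure_of_conv sets.sigma_sets_subset)

lemma sets_bm_filtration_mono:
  assumes "std_brownian_motion M W" and "s \<le> t"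
  shows "sets (bm_filtration M W s) \<subseteq> sets (bm_filtration M W t)"
proof -
  have "{W u -` B \<inter> space M | u B. 0 \<le> u \<and> u \<le> r \<and> B \<in> sets borel} \<union> null_sets M \<subseteq> Pow (space M)" for r
    using bm_filtration_generators_subset[OF assms(1), of r] sets.sets_into_space by blast
  moreover have "{W u -` B \<inter> space M | u B. 0 \<le> u \<and> u \<le> s \<and> B \<in> sets borel} \<union> null_sets M
      \<subseteq> {W u -` B \<inter> space M | u B. 0 \<le> u \<and> u \<le> t \<and> B \<in> sets borel} \<union> null_sets M"
    using assms(2) by fastforce
  ultimately show ?thesis
    unfolding bm_filtration_def by (simp add: sets_measure_of_conv sigma_sets_mono')
qed

lemma filtration_bm_filtration_grid:
  assumes "std_brownian_motion M W" and "0 \<le> h"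
  shows "filtration (space M) (\<lambda>n::nat. bm_filtration M W (real n * h))"
proof
  show "space (bm_filtration M W (real n * h)) = space M" for n
    using subalgebra_bm_filtration[OF assms(1)] by (simp add: subalgebra_def)
  show "sets (bm_filtration M W (real i * h)) \<subseteq> sets (bm_filtration M W (real j * h))" if "i \<le> j" for i j
    using that assms by (intro sets_bm_filtration_mono) (auto intro: mult_right_mono)
qed

section \<open>The Picard operator of the time-discrete scheme\<close>

lemma weighted_suminf_shift_le:
  fixes w a d e :: "nat \<Rightarrow> real"
  assumes w: "\<And>n. w n = q * w (Suc n)" "\<And>n. 0 \<le> w n" and q: "0 \<le> q"
    and a: "\<And>n. 0 \<le> a n" "\<And>n. a n \<le> d (Suc n) + c * d n + e n"
    and d: "\<And>n. 0 \<le> d n" "summable (\<lambda>n. w n * d n)"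
    and e: "summable (\<lambda>n. w n * e n)"
  shows "summable (\<lambda>n. w n * a n)"
    and "(\<Sum>n. w n * a n) \<le> (q + c) * (\<Sum>n. w n * d n) + (\<Sum>n. w n * e n)"
proof -
  define g where "g n = q * (w (Suc n) * d (Suc n)) + c * (w n * d n) + w n * e n" for n
  have d_Suc: "summable (\<lambda>n. w (Suc n) * d (Suc n))"
    using d(2) summable_Suc_iff[of "\<lambda>n. w n * d n"] by simp
  have g: "summable g"
    unfolding g_def by (intro summable_add summable_mult d_Suc d(2) e)
  have le: "w n * a n \<le> g n" for n
  proof -
    have "w n * a n \<le> w n * (d (Suc n) + c * d n + e n)"
      using a(2) w(2) by (rule mult_left_mono)
    then show ?thesis
      unfolding g_def using w(1)[of n] by (simp add: algebra_simps)
  qed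
  show summable: "summable (\<lambda>n. w n * a n)"
    by (rule summable_comparison_test'[OF g]) (use le w(2) a(1) in simp)
  have "(\<Sum>n. w n * a n) \<le> suminf g"
    by (rule suminf_le[OF le summable g])
  also have "\<dots> = q * ((\<Sum>n. w n * d n) - w 0 * d 0) + c * (\<Sum>n. w n * d n) + (\<Sum>n. w n * e n)"
    unfolding g_def suminf_split_head[OF d(2), symmetric]
    by (subst suminf_add[symmetric] suminf_mult[symmetric] | intro summable_add summable_mult d_Suc d(2) e)+
      simp
  also have "\<dots> \<le> (q + c) * (\<Sum>n. w n * d n) + (\<Sum>n. w n * e n)"
    using q w(2)[of 0] d(1)[of 0] by (simp add: algebra_simps)
  finally show "(\<Sum>n. w n * a n) \<le> (q + c) * (\<Sum>n. w n * d n) + (\<Sum>n. w n * e n)" .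
qed

(* The assumptions f_data and xi_data say precisely that T 0 lies in V. *)
locale discrete_bsde = prob_space M
  for M :: "'a measure" and G :: "nat \<Rightarrow> 'a measure" and N :: "'a \<Rightarrow> nat"
    and h L :: real and f :: "nat \<Rightarrow> 'a \<Rightarrow> real \<Rightarrow> real" and xi :: "'a \<Rightarrow> real" +
  assumes subalgebra_G: "\<And>n. subalgebra M (G n)"
    and N_adapted: "\<And>n. Measurable.pred (G n) (\<lambda>\<omega>. n < N \<omega>)"
    and h_pos: "0 < h" and L_pos: "0 < L" and Lh_small: "3 * L * h < 1"
    and f_lipschitz: "\<And>n \<omega> y z. \<bar>f n \<omega> y - f n \<omega> z\<bar> \<le> L * \<bar>y - z\<bar>"
    and f_adapted: "\<And>n A. A \<in> borel_measurable (G n) \<Longrightarrow> (\<lambda>\<omega>. f n \<omega> (A \<omega>)) \<in> borel_measurable (G n)"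
    and xi_adapted: "\<And>n. (\<lambda>\<omega>. indicator {\<omega>. n = N \<omega>} \<omega> * xi \<omega>) \<in> borel_measurable (G n)"
    and f_data: "\<And>n. square_integrable M (\<lambda>\<omega>. indicator {\<omega>. n < N \<omega>} \<omega> * f n \<omega> 0)"
      "summable (\<lambda>n. inverse ((1 - 3 * L * h) ^ n) * L2norm M (\<lambda>\<omega>. indicator {\<omega>. n < N \<omega>} \<omega> * f n \<omega> 0))"
    and xi_data: "\<And>n. square_integrable M (\<lambda>\<omega>. indicator {\<omega>. n = N \<omega>} \<omega> * xi \<omega>)"
      "summable (\<lambda>n. inverse ((1 - 3 * L * h) ^ n) * L2norm M (\<lambda>\<omega>. indicator {\<omega>. n = N \<omega>} \<omega> * xi \<omega>))"
begin

abbreviation "T \<equiv> Top M G N h f xi"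
abbreviation "V \<equiv> Vspace M G N h L"

definition weight :: "nat \<Rightarrow> real" where
  "weight n = inverse ((1 - 3 * L * h) ^ n)"

definition stage_norm :: "(nat \<Rightarrow> 'a \<Rightarrow> real) \<Rightarrow> nat \<Rightarrow> real" where
  "stage_norm R n = L2norm M (\<lambda>\<omega>. indicator {\<omega>. n \<le> N \<omega>} \<omega> * R n \<omega>)"

lemma weight_Suc: "weight n = (1 - 3 * L * h) * weight (Suc n)"
  using Lh_small by (simp add: weight_def)

lemma weight_nonneg: "0 \<le> weight n"
  using Lh_small by (simp add: weight_def)

lemma stage_norm_nonneg: "0 \<le> stage_norm R n"
  by (simp add: stage_norm_def L2norm_nonneg)

lemma Vnorm_eq: "Vnorm M N h L R = (\<Sum>n. weight n * stage_norm R n)"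
  by (simp add: Vnorm_def weight_def stage_norm_def)

lemma measurable_from_G: "X \<in> borel_measurable (G n) \<Longrightarrow> X \<in> borel_measurable M"
  by (rule measurable_from_subalg[OF subalgebra_G])

lemma pred_le_N [measurable]: "Measurable.pred M (\<lambda>\<omega>. n \<le> N \<omega>)"
proof (cases n)
  case (Suc m)
  then show ?thesis
    using measurable_from_subalg[OF subalgebra_G N_adapted[of m]] by (simp add: Suc_le_eq)
qed simp

lemma VspaceD:
  assumes "R \<in> V"
  shows "R n \<in> borel_measurable (G n)" and "square_integrable M (R n)"
    and "AE \<omega> in M. N \<omega> < n \<longrightarrow> R n \<omega> = 0"
    and "summable (\<lambda>n. weight n * stage_norm R n)"
  using assms measurable_from_G
  by (auto simp: Vspace_def square_integrable_def weight_def stage_norm_def)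

lemma VspaceI:
  assumes "\<And>n. R n \<in> borel_measurable (G n)" and "\<And>n. square_integrable M (R n)"
    and "\<And>n. AE \<omega> in M. N \<omega> < n \<longrightarrow> R n \<omega> = 0"
    and "summable (\<lambda>n. weight n * stage_norm R n)"
  shows "R \<in> V"
  using assms by (simp add: Vspace_def square_integrable_def weight_def stage_norm_def)

lemma stage_norm_eq_L2norm:
  assumes "square_integrable M (R n)" and "AE \<omega> in M. N \<omega> < n \<longrightarrow> R n \<omega> = 0"
  shows "stage_norm R n = L2norm M (R n)"
  unfolding stage_norm_def
proof (rule L2norm_cong_AE[symmetric])
  show "AE \<omega> in M. R n \<omega> = indicator {\<omega>. n \<le> N \<omega>} \<omega> * R n \<omega>"
    using assms(2) by eventually_elim (auto simp: indicator_def)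
qed (use assms(1) in \<open>auto simp: square_integrable_def\<close>)

lemma zero_in_Vspace: "(\<lambda>n \<omega>. 0) \<in> V"
  by (rule VspaceI) (simp_all add: stage_norm_def L2norm_def)

lemma Vspace_diff:
  assumes R: "R \<in> V" and S: "S \<in> V"
  shows "(\<lambda>n \<omega>. R n \<omega> - S n \<omega>) \<in> V"
proof -
  have diff: "square_integrable M (\<lambda>\<omega>. R n \<omega> - S n \<omega>)" for n
    using VspaceD(2)[OF R] VspaceD(2)[OF S] by (rule square_integrable_diff)
  have vanish: "AE \<omega> in M. N \<omega> < n \<longrightarrow> R n \<omega> - S n \<omega> = 0" for n
    using VspaceD(3)[OF R, of n] VspaceD(3)[OF S, of n] by eventually_elim simp
  have "weight n * stage_norm (\<lambda>n \<omega>. R n \<omega> - S n \<omega>) n \<le> weight n * stage_norm R n + weight n * stage_norm S n"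
    for n
  proof -
    have "stage_norm (\<lambda>n \<omega>. R n \<omega> - S n \<omega>) n = L2norm M (\<lambda>\<omega>. R n \<omega> - S n \<omega>)"
      by (rule stage_norm_eq_L2norm[where R="\<lambda>n \<omega>. R n \<omega> - S n \<omega>", OF diff vanish])
    also have "\<dots> \<le> L2norm M (R n) + L2norm M (S n)"
      using VspaceD(2)[OF R] VspaceD(2)[OF S] by (rule L2norm_triangle_diff)
    also have "\<dots> = stage_norm R n + stage_norm S n"
      using VspaceD(2,3)[OF R, of n] VspaceD(2,3)[OF S, of n] by (simp add: stage_norm_eq_L2norm)
    finally show ?thesis
      using weight_nonneg[of n] by (simp add: distrib_left[symmetric] mult_left_mono)
  qed
  then have "summable (\<lambda>n. weight n * stage_norm (\<lambda>n \<omega>. R n \<omega> - S n \<omega>) n)"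
    by (intro summable_comparison_test'[OF summable_add[OF VspaceD(4)[OF R] VspaceD(4)[OF S]]])
      (simp add: abs_mult stage_norm_nonneg weight_nonneg)
  with diff vanish show ?thesis
    using VspaceD(1)[OF R] VspaceD(1)[OF S] by (intro VspaceI) simp_all
qed

lemma Top_eq_zero: "N \<omega> < n \<Longrightarrow> T R n \<omega> = 0"
  by (simp add: Top_def)

lemma indicator_mult_Top [simp]: "indicator {\<omega>. n \<le> N \<omega>} \<omega> * T R n \<omega> = T R n \<omega>"
  by (cases "n \<le> N \<omega>") (simp_all add: Top_def)

lemma Top_measurable:
  assumes "R \<in> V"
  shows "T R n \<in> borel_measurable (G n)"
proof -
  have [measurable]: "R n \<in> borel_measurable (G n)"
    using assms by (rule VspaceD)
  have [measurable]: "(\<lambda>\<omega>. f n \<omega> (R n \<omega>)) \<in> borel_measurable (G n)"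
    by (rule f_adapted) simp
  have [measurable]: "Measurable.pred (G n) (\<lambda>\<omega>. n < N \<omega>)"
    by (rule N_adapted)
  note xi_adapted [measurable]
  show ?thesis
    unfolding Top_def by measurable
qed

lemma Top_diff_pointwise:
  "\<bar>T R n \<omega> - T S n \<omega>\<bar>
     \<le> \<bar>real_cond_exp M (G n) (R (Suc n)) \<omega> - real_cond_exp M (G n) (S (Suc n)) \<omega>\<bar>
       + h * L * \<bar>R n \<omega> - S n \<omega>\<bar>"
proof (cases "n < N \<omega>")
  case True
  have "\<bar>T R n \<omega> - T S n \<omega>\<bar>
      = \<bar>(real_cond_exp M (G n) (R (Suc n)) \<omega> - real_cond_exp M (G n) (S (Suc n)) \<omega>)
         + h * (f n \<omega> (R n \<omega>) - f n \<omega> (S n \<omega>))\<bar>"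
    using True by (simp add: Top_def algebra_simps)
  also have "\<dots> \<le> \<bar>real_cond_exp M (G n) (R (Suc n)) \<omega> - real_cond_exp M (G n) (S (Suc n)) \<omega>\<bar>
         + h * \<bar>f n \<omega> (R n \<omega>) - f n \<omega> (S n \<omega>)\<bar>"
    using h_pos by (simp add: abs_triangle_ineq[THEN order_trans] abs_mult)
  also have "\<dots> \<le> \<bar>real_cond_exp M (G n) (R (Suc n)) \<omega> - real_cond_exp M (G n) (S (Suc n)) \<omega>\<bar>
         + h * (L * \<bar>R n \<omega> - S n \<omega>\<bar>)"
    using f_lipschitz h_pos by (simp add: mult_left_mono)
  finally show ?thesis
    by (simp add: mult.assoc)
qed (use h_pos L_pos in \<open>simp add: Top_def\<close>)

lemma stage_norm_Top_diff_le:
  assumes R: "R \<in> V" and S: "S \<in> V"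
  shows "square_integrable M (\<lambda>\<omega>. T R n \<omega> - T S n \<omega>)"
    and "stage_norm (\<lambda>n \<omega>. T R n \<omega> - T S n \<omega>) n
      \<le> stage_norm (\<lambda>n \<omega>. R n \<omega> - S n \<omega>) (Suc n) + h * L * stage_norm (\<lambda>n \<omega>. R n \<omega> - S n \<omega>) n"
proof -
  interpret G: finite_measure_subalgebra M "G n"
    using subalgebra_G by unfold_locales
  define D where "D = (\<lambda>n \<omega>. R n \<omega> - S n \<omega>)"
  have D: "D \<in> V"
    unfolding D_def using R S by (rule Vspace_diff)
  define C where "C = real_cond_exp M (G n) (D (Suc n))"
  have C: "square_integrable M C" "L2norm M C \<le> L2norm M (D (Suc n))"
    unfolding C_def using subalgebra_G VspaceD(2)[OF D] by (rule real_cond_exp_L2_contraction)+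
  have bound: "square_integrable M (\<lambda>\<omega>. \<bar>C \<omega>\<bar> + h * L * \<bar>D n \<omega>\<bar>)"
    by (rule square_integrable_add[OF square_integrable_abs[OF C(1)]
          square_integrable_cmult[OF square_integrable_abs[OF VspaceD(2)[OF D]]]])
  have "integrable M (R (Suc n))" "integrable M (S (Suc n))"
    using VspaceD(2)[OF R] VspaceD(2)[OF S] by (simp_all add: integrable_if_square_integrable)
  then have "AE \<omega> in M. C \<omega> = real_cond_exp M (G n) (R (Suc n)) \<omega> - real_cond_exp M (G n) (S (Suc n)) \<omega>"
    unfolding C_def D_def by (rule G.real_cond_exp_diff)
  then have dominated: "AE \<omega> in M. \<bar>T R n \<omega> - T S n \<omega>\<bar> \<le> \<bar>C \<omega>\<bar> + h * L * \<bar>D n \<omega>\<bar>"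
    by eventually_elim (use Top_diff_pointwise[of R n _ S] in \<open>simp add: D_def\<close>)
  have measurable: "(\<lambda>\<omega>. T R n \<omega> - T S n \<omega>) \<in> borel_measurable M"
    using measurable_from_G[OF Top_measurable[OF R]] measurable_from_G[OF Top_measurable[OF S]]
    by (rule borel_measurable_diff)
  show "square_integrable M (\<lambda>\<omega>. T R n \<omega> - T S n \<omega>)"
    by (rule square_integrable_dominated[OF measurable bound dominated])
  have "stage_norm (\<lambda>n \<omega>. T R n \<omega> - T S n \<omega>) n = L2norm M (\<lambda>\<omega>. T R n \<omega> - T S n \<omega>)"
    by (simp add: stage_norm_def right_diff_distrib)
  also have "\<dots> \<le> L2norm M (\<lambda>\<omega>. \<bar>C \<omega>\<bar> + h * L * \<bar>D n \<omega>\<bar>)"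
    by (rule L2norm_mono_AE[OF measurable bound dominated])
  also have "\<dots> \<le> L2norm M C + h * L * L2norm M (D n)"
    using L2norm_triangle[OF square_integrable_abs[OF C(1)]
        square_integrable_cmult[where c="h * L", OF square_integrable_abs[OF VspaceD(2)[OF D]]]] h_pos L_pos
    by (simp add: L2norm_cmult abs_mult)
  also have "\<dots> \<le> L2norm M (D (Suc n)) + h * L * L2norm M (D n)"
    using C(2) by simp
  also have "\<dots> = stage_norm D (Suc n) + h * L * stage_norm D n"
    using VspaceD(2,3)[OF D] by (simp add: stage_norm_eq_L2norm)
  finally show "stage_norm (\<lambda>n \<omega>. T R n \<omega> - T S n \<omega>) n
      \<le> stage_norm (\<lambda>n \<omega>. R n \<omega> - S n \<omega>) (Suc n) + h * L * stage_norm (\<lambda>n \<omega>. R n \<omega> - S n \<omega>) n"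
    unfolding D_def .
qed

lemma stage_norm_Top_zero_le:
  shows "square_integrable M (T (\<lambda>n \<omega>. 0) n)"
    and "stage_norm (T (\<lambda>n \<omega>. 0)) n
      \<le> h * L2norm M (\<lambda>\<omega>. indicator {\<omega>. n < N \<omega>} \<omega> * f n \<omega> 0) + L2norm M (\<lambda>\<omega>. indicator {\<omega>. n = N \<omega>} \<omega> * xi \<omega>)"
proof -
  define E0 where "E0 = real_cond_exp M (G n) (\<lambda>\<omega>. 0)"
  define fd where "fd = (\<lambda>\<omega>. indicator {\<omega>. n < N \<omega>} \<omega> * f n \<omega> 0)"
  define xd where "xd = (\<lambda>\<omega>. indicator {\<omega>. n = N \<omega>} \<omega> * xi \<omega>)"
  have E0: "square_integrable M E0" "L2norm M E0 \<le> 0"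
    using real_cond_exp_L2_contraction[OF subalgebra_G, of "\<lambda>\<omega>. 0" n]
    by (simp_all add: E0_def L2norm_def)
  have E0_fd: "square_integrable M (\<lambda>\<omega>. \<bar>E0 \<omega>\<bar> + h * \<bar>fd \<omega>\<bar>)"
    unfolding fd_def
    by (rule square_integrable_add[OF square_integrable_abs[OF E0(1)]
          square_integrable_cmult[OF square_integrable_abs[OF f_data(1)]]])
  have bound: "square_integrable M (\<lambda>\<omega>. \<bar>E0 \<omega>\<bar> + h * \<bar>fd \<omega>\<bar> + \<bar>xd \<omega>\<bar>)"
    unfolding xd_def by (rule square_integrable_add[OF E0_fd square_integrable_abs[OF xi_data(1)]])
  have dominated: "\<bar>T (\<lambda>n \<omega>. 0) n \<omega>\<bar> \<le> \<bar>E0 \<omega>\<bar> + h * \<bar>fd \<omega>\<bar> + \<bar>xd \<omega>\<bar>" for \<omega>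
    using h_pos abs_triangle_ineq[of "E0 \<omega>" "h * fd \<omega>"]
    by (auto simp: Top_def E0_def fd_def xd_def indicator_def abs_mult)
  have measurable: "T (\<lambda>n \<omega>. 0) n \<in> borel_measurable M"
    by (rule measurable_from_G[OF Top_measurable[OF zero_in_Vspace]])
  show "square_integrable M (T (\<lambda>n \<omega>. 0) n)"
    by (rule square_integrable_dominated[OF measurable bound AE_I2[OF dominated]])
  have "stage_norm (T (\<lambda>n \<omega>. 0)) n = L2norm M (T (\<lambda>n \<omega>. 0) n)"
    by (simp add: stage_norm_def)
  also have "\<dots> \<le> L2norm M (\<lambda>\<omega>. \<bar>E0 \<omega>\<bar> + h * \<bar>fd \<omega>\<bar> + \<bar>xd \<omega>\<bar>)"
    by (rule L2norm_mono_AE[OF measurable bound AE_I2[OF dominated]])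
  also have "\<dots> \<le> L2norm M (\<lambda>\<omega>. \<bar>E0 \<omega>\<bar> + h * \<bar>fd \<omega>\<bar>) + L2norm M xd"
    using L2norm_triangle[OF E0_fd square_integrable_abs[OF xi_data(1)]] by (simp add: xd_def)
  also have "\<dots> \<le> L2norm M E0 + h * L2norm M fd + L2norm M xd"
    using L2norm_triangle[OF square_integrable_abs[OF E0(1)]
        square_integrable_cmult[where c=h, OF square_integrable_abs[OF f_data(1)]], of n] h_pos
    by (simp add: L2norm_cmult fd_def)
  finally show "stage_norm (T (\<lambda>n \<omega>. 0)) n \<le> h * L2norm M fd + L2norm M xd"
    using E0(2) by simp
qed

lemma Top_zero_in_Vspace: "T (\<lambda>n \<omega>. 0) \<in> V"
proof (rule VspaceI)
  have "weight n * stage_norm (T (\<lambda>n \<omega>. 0)) n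
      \<le> h * (weight n * L2norm M (\<lambda>\<omega>. indicator {\<omega>. n < N \<omega>} \<omega> * f n \<omega> 0))
        + weight n * L2norm M (\<lambda>\<omega>. indicator {\<omega>. n = N \<omega>} \<omega> * xi \<omega>)" for n
    using mult_left_mono[OF stage_norm_Top_zero_le(2) weight_nonneg, of n] by (simp add: algebra_simps)
  then show "summable (\<lambda>n. weight n * stage_norm (T (\<lambda>n \<omega>. 0)) n)"
    by (intro summable_comparison_test'[OF summable_add[OF summable_mult[OF f_data(2), of h] xi_data(2),
          folded weight_def]])
      (simp add: abs_mult weight_nonneg stage_norm_nonneg)
qed (simp_all add: Top_measurable[OF zero_in_Vspace] stage_norm_Top_zero_le(1) Top_eq_zero)

lemma Top_in_Vspace:
  assumes R: "R \<in> V"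
  shows "T R \<in> V"
proof -
  define Z :: "nat \<Rightarrow> 'a \<Rightarrow> real" where "Z = (\<lambda>n \<omega>. 0)"
  have Z: "Z \<in> V" and TZ: "T Z \<in> V"
    unfolding Z_def by (rule zero_in_Vspace, rule Top_zero_in_Vspace)
  note diff = stage_norm_Top_diff_le[OF R Z]
  have RZ: "(\<lambda>n \<omega>. R n \<omega> - Z n \<omega>) = R"
    by (simp add: Z_def)
  have square: "square_integrable M (T R n)" for n
    using square_integrable_add[OF diff(1)[where n=n] VspaceD(2)[OF TZ, where n=n]] by simp
  have "stage_norm (T R) n \<le> stage_norm R (Suc n) + h * L * stage_norm R n + stage_norm (T Z) n" for n
  proof -
    have "stage_norm (T R) n = L2norm M (\<lambda>\<omega>. (T R n \<omega> - T Z n \<omega>) + T Z n \<omega>)"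
      by (simp add: stage_norm_def)
    also have "\<dots> \<le> stage_norm (\<lambda>n \<omega>. T R n \<omega> - T Z n \<omega>) n + stage_norm (T Z) n"
      using L2norm_triangle[OF diff(1)[where n=n] VspaceD(2)[OF TZ, where n=n]]
      by (simp add: stage_norm_def right_diff_distrib)
    also have "\<dots> \<le> stage_norm R (Suc n) + h * L * stage_norm R n + stage_norm (T Z) n"
      using diff(2) by (simp add: RZ)
    finally show ?thesis .
  qed
  then have "summable (\<lambda>n. weight n * stage_norm (T R) n)"
    using Lh_small
    by (intro weighted_suminf_shift_le(1)[OF weight_Suc weight_nonneg _ stage_norm_nonneg _
          stage_norm_nonneg VspaceD(4)[OF R] VspaceD(4)[OF TZ]]) simp_all
  then show ?thesis
    using Top_measurable[OF R] square by (intro VspaceI) (simp_all add: Top_eq_zero)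
qed

lemma Top_contraction:
  assumes R: "R \<in> V" and S: "S \<in> V"
  shows "Vnorm M N h L (\<lambda>n \<omega>. T R n \<omega> - T S n \<omega>) \<le> (1 - 2 * L * h) * Vnorm M N h L (\<lambda>n \<omega>. R n \<omega> - S n \<omega>)"
proof -
  have "(\<Sum>n. weight n * stage_norm (\<lambda>n \<omega>. T R n \<omega> - T S n \<omega>) n)
      \<le> ((1 - 3 * L * h) + h * L) * (\<Sum>n. weight n * stage_norm (\<lambda>n \<omega>. R n \<omega> - S n \<omega>) n) + (\<Sum>n. weight n * 0)"
    using Lh_small stage_norm_Top_diff_le(2)[OF R S]
    by (intro weighted_suminf_shift_le(2)[OF weight_Suc weight_nonneg _ stage_norm_nonneg _
          stage_norm_nonneg VspaceD(4)[OF Vspace_diff[OF R S]]]) simp_all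
  then show ?thesis
    by (simp add: Vnorm_eq algebra_simps)
qed

theorem Top_contraction_mapping:
  "(\<forall>R \<in> V. T R \<in> V) \<and>
   (\<exists>c. 0 \<le> c \<and> c < 1 \<and> (\<forall>R \<in> V. \<forall>S \<in> V.
      Vnorm M N h L (\<lambda>n \<omega>. T R n \<omega> - T S n \<omega>) \<le> c * Vnorm M N h L (\<lambda>n \<omega>. R n \<omega> - S n \<omega>)))"
  using Top_in_Vspace Top_contraction Lh_small h_pos L_pos
  by (intro conjI ballI exI[of _ "1 - 2 * L * h"]) auto

end

lemma discrete_bsde_of_moment_bounds:
  fixes f :: "nat \<Rightarrow> 'a \<Rightarrow> real \<Rightarrow> real" and Zf Zx Ze :: "'a \<Rightarrow> ennreal"
  assumes "prob_space M" and G: "filtration (space M) G" and sub: "\<And>n. subalgebra M (G n)"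
    and N: "stopping_time G N"
    and h: "0 < h" and L: "0 < L" and Lh: "12 * (L * h) < 1" and \<rho>: "16 * L < \<rho>"
    and lipschitz: "\<And>n \<omega> y z. \<bar>f n \<omega> y - f n \<omega> z\<bar> \<le> L * \<bar>y - z\<bar>"
    and adapted: "\<And>n A. A \<in> borel_measurable (G n) \<Longrightarrow> (\<lambda>\<omega>. f n \<omega> (A \<omega>)) \<in> borel_measurable (G n)"
    and xi: "xi \<in> borel_measurable (filtration.pre_sigma (space M) G N)"
    and Zf: "finite_expectation M Zf" "\<And>n \<omega>. n < N \<omega> \<Longrightarrow> ennreal (\<bar>f n \<omega> 0\<bar> ^ 4) \<le> Zf \<omega>"
    and Zx: "finite_expectation M Zx" "\<And>\<omega>. ennreal (\<bar>xi \<omega>\<bar> ^ 4) \<le> Zx \<omega>"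
    and Ze: "finite_expectation M Ze" "\<And>\<omega>. ennreal (exp (\<rho> * h * real (N \<omega>))) \<le> Ze \<omega>"
  shows "discrete_bsde M G N h L f xi"
proof -
  interpret G: filtration "space M" G
    by (fact G)
  have N_adapted [measurable]: "Measurable.pred (G n) (\<lambda>\<omega>. n < N \<omega>)" for n
    using N by (rule stopping_timeD2)
  have xi_adapted: "(\<lambda>\<omega>. indicator {\<omega>. n = N \<omega>} \<omega> * xi \<omega>) \<in> borel_measurable (G n)" for n
    using N xi by (rule G.indicator_stopping_time_eq_mult_measurable)
  have [measurable]: "(\<lambda>\<omega>. f n \<omega> 0) \<in> borel_measurable (G n)" for n
    using adapted[of "\<lambda>_. 0" n] by simp
  have f_measurable: "(\<lambda>\<omega>. indicator {\<omega>. n < N \<omega>} \<omega> * f n \<omega> 0) \<in> borel_measurable M" for n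
    by (rule measurable_from_subalg[OF sub, of _ n]) measurable
  have xi_measurable: "(\<lambda>\<omega>. indicator {\<omega>. n = N \<omega>} \<omega> * xi \<omega>) \<in> borel_measurable M" for n
    using sub xi_adapted by (rule measurable_from_subalg)
  have q: "0 < 1 - 3 * L * h"
    using h L Lh by simp
  have \<beta>: "0 < \<rho> * h"
    using h L \<rho> by (intro mult_pos_pos) simp_all
  have "1 < (1 - 3 * (L * h)) * exp (\<rho> * h / 4)"
    using h L Lh \<rho> by (intro one_less_mult_exp_quarter) simp_all
  then have margin: "1 < (1 - 3 * L * h) * exp (\<rho> * h / 4)"
    by (simp add: mult.assoc)
  have f_moment: "ennreal ((indicator {\<omega>. n < N \<omega>} \<omega> * f n \<omega> 0) ^ 4) \<le> Zf \<omega>" for n \<omega>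
    using Zf(2)[of n \<omega>] by (cases "n < N \<omega>") (simp_all add: power_even_abs_numeral)
  have f_support: "indicator {\<omega>. n < N \<omega>} \<omega> * f n \<omega> 0 \<noteq> 0 \<Longrightarrow> n \<le> N \<omega>" for n \<omega>
    by (simp add: indicator_def split: if_splits)
  note f_data = summable_weighted_L2norm_of_moments[where Y="\<lambda>n \<omega>. indicator {\<omega>. n < N \<omega>} \<omega> * f n \<omega> 0",
      OF f_measurable Zf(1) Ze(1) f_moment Ze(2) f_support \<beta> q margin]
  have xi_moment: "ennreal ((indicator {\<omega>. n = N \<omega>} \<omega> * xi \<omega>) ^ 4) \<le> Zx \<omega>" for n \<omega>
    using Zx(2)[of \<omega>] by (cases "n = N \<omega>") (simp_all add: power_even_abs_numeral)
  have xi_support: "indicator {\<omega>. n = N \<omega>} \<omega> * xi \<omega> \<noteq> 0 \<Longrightarrow> n \<le> N \<omega>" for n \<omega>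
    by (simp add: indicator_def split: if_splits)
  note xi_data = summable_weighted_L2norm_of_moments[where Y="\<lambda>n \<omega>. indicator {\<omega>. n = N \<omega>} \<omega> * xi \<omega>",
      OF xi_measurable Zx(1) Ze(1) xi_moment Ze(2) xi_support \<beta> q margin]
  show ?thesis
  proof (intro discrete_bsde.intro discrete_bsde_axioms.intro)
    show "3 * L * h < 1"
      using Lh h L by simp
  qed (fact | assumption | rule N_adapted xi_adapted f_data xi_data)+
qed

theorem mainTheorem13:
  fixes M :: "'a measure" and W :: "real \<Rightarrow> 'a \<Rightarrow> real ^ 'd::finite"
    and F :: "real \<Rightarrow> 'a measure"
    and \<tau> :: "'a \<Rightarrow> real" and Nh :: "real \<Rightarrow> 'a \<Rightarrow> nat"
    and xi :: "real \<Rightarrow> 'a \<Rightarrow> real" and f :: "real \<Rightarrow> nat \<Rightarrow> 'a \<Rightarrow> real \<Rightarrow> real"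
    and Lf h0 h :: real
  assumes bm: "std_brownian_motion M W"
    and F_def: "F = bm_filtration M W"
    and tau_nonneg: "\<And>\<omega>. \<omega> \<in> space M \<Longrightarrow> 0 \<le> \<tau> \<omega>"
    and tau_stop: "stopping_time F \<tau>"
    and taus_stop: "\<And>k. k \<in> {0<..h0} \<Longrightarrow> stopping_time (\<lambda>n. F (real n * k)) (Nh k)"
    and Lf_pos: "0 < Lf"
    and H_h0: "h0 < min Lf (1 / (12 * Lf))"
    and H_h: "h \<in> {0<..h0}"
    and R4: "\<exists>\<rho>>4 * 4 * Lf. integrable M (\<lambda>\<omega>. exp (\<rho> * \<tau> \<omega>)) \<and>
               finite_expectation M (\<lambda>\<omega>. SUP k\<in>{0<..h0}. ennreal (exp (\<rho> * (real (Nh k \<omega>) * k))))"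
    and F_lip: "\<And>k n \<omega> y z. k \<in> {0<..h0} \<Longrightarrow> \<bar>f k n \<omega> y - f k n \<omega> z\<bar> \<le> Lf * \<bar>y - z\<bar>"
    and F_adapt: "\<And>k n A. k \<in> {0<..h0} \<Longrightarrow> A \<in> borel_measurable (F (real n * k)) \<Longrightarrow>
                    (\<lambda>\<omega>. f k n \<omega> (A \<omega>)) \<in> borel_measurable (F (real n * k))"
    and F4: "finite_expectation M (\<lambda>\<omega>. SUP k\<in>{0<..h0}.
               SUP n\<in>{n. real n * k \<le> max (\<tau> \<omega>) (real (Nh k \<omega>) * k)}. ennreal (\<bar>f k n \<omega> 0\<bar> ^ 4))"
    and T_meas: "\<And>k. k \<in> {0<..h0} \<Longrightarrow>
                   xi k \<in> borel_measurable (filtration.pre_sigma (space M) (\<lambda>n. F (real n * k)) (Nh k))"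
    and T4: "finite_expectation M (\<lambda>\<omega>. SUP k\<in>{0<..h0}. ennreal (\<bar>xi k \<omega>\<bar> ^ 4))"
  shows "(\<forall>R \<in> Vspace M (\<lambda>n. F (real n * h)) (Nh h) h Lf.
            Top M (\<lambda>n. F (real n * h)) (Nh h) h (f h) (xi h) R \<in> Vspace M (\<lambda>n. F (real n * h)) (Nh h) h Lf) \<and>
         (\<exists>c. 0 \<le> c \<and> c < 1 \<and>
            (\<forall>R \<in> Vspace M (\<lambda>n. F (real n * h)) (Nh h) h Lf. \<forall>S \<in> Vspace M (\<lambda>n. F (real n * h)) (Nh h) h Lf.
               Vnorm M (Nh h) h Lf (\<lambda>n \<omega>. Top M (\<lambda>n. F (real n * h)) (Nh h) h (f h) (xi h) R n \<omega>
                                       - Top M (\<lambda>n. F (real n * h)) (Nh h) h (f h) (xi h) S n \<omega>)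
               \<le> c * Vnorm M (Nh h) h Lf (\<lambda>n \<omega>. R n \<omega> - S n \<omega>)))"
proof -
  have h: "0 < h" "h \<le> h0"
    using H_h by simp_all
  have "12 * (Lf * h) \<le> 12 * (Lf * h0)"
    using h Lf_pos by simp
  also have "\<dots> < 1"
    using H_h0 Lf_pos by (simp add: field_simps)
  finally have Lh: "12 * (Lf * h) < 1" .
  obtain \<rho> where \<rho>: "16 * Lf < \<rho>"
    and exp_moment: "finite_expectation M (\<lambda>\<omega>. SUP k\<in>{0<..h0}. ennreal (exp (\<rho> * (real (Nh k \<omega>) * k))))"
    using R4 by auto
  have f_bound: "ennreal (\<bar>f h n \<omega> 0\<bar> ^ 4) \<le> (SUP k\<in>{0<..h0}.
      SUP n\<in>{n. real n * k \<le> max (\<tau> \<omega>) (real (Nh k \<omega>) * k)}. ennreal (\<bar>f k n \<omega> 0\<bar> ^ 4))"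
    if "n < Nh h \<omega>" for n \<omega>
  proof -
    have "real n * h \<le> max (\<tau> \<omega>) (real (Nh h \<omega>) * h)"
      using that h by (simp add: le_max_iff_disj)
    then show ?thesis
      using H_h by (intro SUP_upper2[of h] SUP_upper2[of n]) simp_all
  qed
  have "discrete_bsde M (\<lambda>n. F (real n * h)) (Nh h) h Lf (f h) (xi h)"
  proof (rule discrete_bsde_of_moment_bounds[OF _ _ _ taus_stop[OF H_h] h(1) Lf_pos Lh \<rho>
        F_lip[OF H_h] F_adapt[OF H_h] T_meas[OF H_h] F4 f_bound T4 _ exp_moment])
    show "prob_space M"
      using bm by (simp add: std_brownian_motion_def)
    show "filtration (space M) (\<lambda>n. F (real n * h))"
      unfolding F_def using bm by (rule filtration_bm_filtration_grid) (simp add: h(1) less_imp_le)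
    show "subalgebra M (F (real n * h))" for n
      unfolding F_def using bm by (rule subalgebra_bm_filtration)
    show "ennreal (\<bar>xi h \<omega>\<bar> ^ 4) \<le> (SUP k\<in>{0<..h0}. ennreal (\<bar>xi k \<omega>\<bar> ^ 4))" for \<omega>
      using H_h by (rule SUP_upper)
    show "ennreal (exp (\<rho> * h * real (Nh h \<omega>))) \<le> (SUP k\<in>{0<..h0}. ennreal (exp (\<rho> * (real (Nh k \<omega>) * k))))" for \<omega>
      using H_h by (intro SUP_upper2[of h]) (simp_all add: mult_ac)
  qed
  then show ?thesis
    by (rule discrete_bsde.Top_contraction_mapping)
qed

end
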